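(* Let $k\ge 1$ be an integer with $4\nmid k$ such that $\mathcal{D}:=(k^2+4)/\gcd(2,k)^2$ is squarefree, let $\alpha=\frac{k+\sqrt{k^2+4}}{2}$, $\beta=\frac{k-\sqrt{k^2+4}}{2}$, let $p\ge 3$ be a prime and $\mathcal{F}_p(x)=x^{2p}-kx^p-1$. Then $\mathcal{F}_p(\beta)\equiv 0 \pmod{p^2}$ if and only if $\mathcal{F}_p(\alpha)\equiv 0\pmod{p^2}$.
   Context: Congruences are taken in the ring of algebraic integers of $\mathbb{Q}(\sqrt{k^2+4})$: $x\equiv y\pmod{m}$ means $(x-y)/m$ is an algebraic integer. *)

theory Defs
  imports "HOL-Computational_Algebra.Computational_Algebra"
begin

text \<open>All numbers involved lie in the real quadratic field Q(sqrt(k^2+4)), so this is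
  congruence in its ring of integers.\<close>
definition alg_cong :: "real \<Rightarrow> real \<Rightarrow> real \<Rightarrow> bool" where
  "alg_cong x y m \<longleftrightarrow> algebraic_int ((x - y) / m)"

definition calF :: "int \<Rightarrow> nat \<Rightarrow> real \<Rightarrow> real" where
  "calF k p x = x ^ (2 * p) - of_int k * x ^ p - 1"

end

theory Submission
  imports Defs
begin

text \<open>Conjugation \<open>\<surd>(k\<^sup>2+4) \<mapsto> -\<surd>(k\<^sup>2+4)\<close> is an automorphism of \<open>\<rat>(\<surd>(k\<^sup>2+4))\<close> fixing \<open>\<rat>\<close>
  and swapping \<open>\<alpha>\<close> and \<open>\<beta>\<close>. It maps a root of a monic integer polynomial to a root of the
  same polynomial, hence preserves algebraic integers. Since \<open>F\<^sub>p(x)/p\<^sup>2\<close> has rational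
  coefficients, \<open>F\<^sub>p(\<beta>)/p\<^sup>2\<close> is an algebraic integer iff \<open>F\<^sub>p(\<alpha>)/p\<^sup>2\<close> is.\<close>

lemma poly_conjugates_Rats:
  fixes q :: "'a::field_char_0 poly" and s u v :: 'a
  assumes "\<forall>i. coeff q i \<in> \<rat>" "u \<in> \<rat>" "v \<in> \<rat>" "s^2 \<in> \<rat>"
  shows "\<exists>A\<in>\<rat>. \<exists>B\<in>\<rat>. poly q (u + v*s) = A + B*s \<and> poly q (u - v*s) = A - B*s"
  using assms(1)
proof (induction q rule: pCons_induct)
  case 0
  show ?case by (intro bexI[of _ 0]) auto
next
  case (pCons a q)
  have "\<forall>i. coeff q i \<in> \<rat>" using pCons.prems by (metis coeff_pCons_Suc)
  then obtain A B where "A \<in> \<rat>" "B \<in> \<rat>"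
    and plus: "poly q (u + v*s) = A + B*s" and minus: "poly q (u - v*s) = A - B*s"
    using pCons.IH by blast
  have "a \<in> \<rat>" using pCons.prems by (metis coeff_pCons_0)
  then have "a + u*A + v*B*s^2 \<in> \<rat>" "u*B + v*A \<in> \<rat>"
    using \<open>A \<in> \<rat>\<close> \<open>B \<in> \<rat>\<close> assms(2-4) by (simp_all add: Rats_add Rats_mult)
  moreover have "poly (pCons a q) (u + v*s) = (a + u*A + v*B*s^2) + (u*B + v*A)*s"
    by (simp only: poly_pCons plus) (simp add: algebra_simps power2_eq_square)
  moreover have "poly (pCons a q) (u - v*s) = (a + u*A + v*B*s^2) - (u*B + v*A)*s"
    by (simp only: poly_pCons minus) (simp add: algebra_simps power2_eq_square)
  ultimately show ?case by blast
qed

lemma algebraic_int_conjugate: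
  fixes s A B :: "'a::field_char_0"
  assumes "s \<notin> \<rat>" "s^2 \<in> \<rat>" "A \<in> \<rat>" "B \<in> \<rat>" "algebraic_int (A + B*s)"
  shows "algebraic_int (A - B*s)"
proof -
  from assms(5) obtain q where q: "lead_coeff q = 1" "\<forall>i. coeff q i \<in> \<int>" "poly q (A + B*s) = 0"
    by (auto elim: algebraic_int.cases)
  have "\<forall>i. coeff q i \<in> \<rat>" using q(2) Ints_subset_Rats by blast
  then obtain C D where "C \<in> \<rat>" "D \<in> \<rat>"
    and plus: "poly q (A + B*s) = C + D*s" and minus: "poly q (A - B*s) = C - D*s"
    using poly_conjugates_Rats[OF _ assms(3,4,2)] by blast
  have "D = 0"
  proof (rule ccontr)
    assume "D \<noteq> 0"
    moreover have "C + D*s = 0" using plus q(3) by simp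
    ultimately have "s = - C / D" by (simp add: field_simps add_eq_0_iff2)
    then show False using assms(1) \<open>C \<in> \<rat>\<close> \<open>D \<in> \<rat>\<close> by simp
  qed
  with plus q(3) have "poly q (A - B*s) = 0" by (simp add: minus)
  with q show ?thesis by (intro algebraic_int.intros)
qed

lemma algebraic_int_poly_conjugate_iff:
  fixes q :: "'a::field_char_0 poly" and s u v :: 'a
  assumes "\<forall>i. coeff q i \<in> \<rat>" "u \<in> \<rat>" "v \<in> \<rat>" "s \<notin> \<rat>" "s^2 \<in> \<rat>"
  shows "algebraic_int (poly q (u - v*s)) \<longleftrightarrow> algebraic_int (poly q (u + v*s))"
proof -
  obtain A B where AB: "A \<in> \<rat>" "B \<in> \<rat>"
    and "poly q (u + v*s) = A + B*s" "poly q (u - v*s) = A - B*s"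
    using poly_conjugates_Rats[OF assms(1-3,5)] by blast
  moreover have "algebraic_int (A - B*s) \<longleftrightarrow> algebraic_int (A + B*s)"
    using algebraic_int_conjugate[OF assms(4,5) AB] algebraic_int_conjugate[OF assms(4,5), of A "-B"] AB
    by auto
  ultimately show ?thesis by simp
qed
lemma square_plus_four_not_square:
  fixes k m :: int
  assumes "k \<noteq> 0"
  shows "m^2 \<noteq> k^2 + 4"
proof
  assume eq: "m^2 = k^2 + 4"
  have "\<bar>k\<bar>^2 < \<bar>m\<bar>^2" using eq by simp
  then have lower: "\<bar>k\<bar> < \<bar>m\<bar>" by (rule power_less_imp_less_base) simp
  have "\<bar>m\<bar>^2 < (\<bar>k\<bar> + 2)^2"
    using eq assms by (simp add: power2_eq_square algebra_simps)
  then have upper: "\<bar>m\<bar> < \<bar>k\<bar> + 2" by (rule power_less_imp_less_base) simp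
  from lower upper have "\<bar>m\<bar> = \<bar>k\<bar> + 1" by simp
  then have "(\<bar>k\<bar> + 1)^2 = \<bar>k\<bar>^2 + 4" using eq by (metis power2_abs)
  then have "2 * \<bar>k\<bar> = 3" by (simp add: power2_eq_square algebra_simps)
  then show False by presburger
qed

lemma sqrt_square_plus_four_not_Rats:
  fixes k :: int
  assumes "k \<noteq> 0"
  shows "sqrt (of_int k^2 + 4) \<notin> \<rat>"
proof
  assume "sqrt (of_int k^2 + 4) \<in> \<rat>"
  moreover have "algebraic_int (sqrt (of_int k^2 + 4))"
    using algebraic_int_sqrt algebraic_int_of_int[of "k^2 + 4"] by simp
  ultimately have "sqrt (of_int k^2 + 4) \<in> \<int>"
    by (rule rational_algebraic_int_is_int[rotated])
  then obtain m where "sqrt (of_int k^2 + 4) = of_int m" by (auto elim: Ints_cases)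
  then have "of_int (m^2) = (of_int (k^2 + 4) :: real)"
    by (metis of_int_add of_int_numeral of_int_power real_sqrt_pow2 add_nonneg_nonneg zero_le_power2 zero_le_numeral)
  then show False using square_plus_four_not_square[OF assms] by (simp only: of_int_eq_iff)
qed

theorem lemma3p3:
  fixes k :: int and p :: nat
  assumes "k \<ge> 1" and "\<not> (4 dvd k)"
    and "squarefree ((k^2 + 4) div (gcd 2 k)^2)"
    and "prime p" and "p \<ge> 3"
  shows "alg_cong (calF k p ((of_int k - sqrt (of_int k^2 + 4)) / 2)) 0 (of_nat p ^ 2)
     \<longleftrightarrow> alg_cong (calF k p ((of_int k + sqrt (of_int k^2 + 4)) / 2)) 0 (of_nat p ^ 2)"
proof -
  define s where "s = sqrt (of_int k^2 + 4 :: real)"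
  define q :: "real poly"
    where "q = smult (1 / of_nat p ^ 2) (monom 1 (2*p) - monom (of_int k) p - 1)"
  have "\<forall>i. coeff q i \<in> \<rat>" by (simp add: q_def coeff_monom)
  moreover have "s \<notin> \<rat>" using sqrt_square_plus_four_not_Rats assms(1) by (simp add: s_def)
  moreover have "s^2 \<in> \<rat>" by (simp add: s_def)
  ultimately have "algebraic_int (poly q (of_int k / 2 - 1/2 * s))
      \<longleftrightarrow> algebraic_int (poly q (of_int k / 2 + 1/2 * s))"
    by (intro algebraic_int_poly_conjugate_iff) auto
  moreover have "poly q x = calF k p x / of_nat p ^ 2" for x
    by (simp add: q_def calF_def poly_monom)
  ultimately show ?thesis
    by (simp add: alg_cong_def diff_divide_distrib add_divide_distrib flip: s_def)
qed
end
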